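(* Let $X$ and $Y$ be $\emptyset$-hyperdefinable sets with $X\perp_\emptyset Y$. If an $\emptyset$-hyperdefinable set $Z$ is both almost $X$-internal within $X\cup Y$ and almost $Y$-internal within $X\cup Y$, then $Z$ is bounded (has cardinality $<\kappa$).
   Context: Work in a $\kappa$-saturated, strongly $\kappa$-homogeneous monster model $\mathfrak M$ for a very large $\kappa$; "bounded" means of cardinality $<\kappa$. A countable equivalence relation over $A$ is an equivalence relation given by a conjunction of countably many formulas over $A$ (in countably many variables). A hyperimaginary of type $E$ is the class $a_E$ of a tuple $a$ modulo a countable equivalence relation $E$ over $\emptyset$; tuples (possibly infinite) of hyperimaginaries are allowed, and all tuples and parameter sets are hyperimaginary unless otherwise stated. A hyperimaginary $e$ is definable (resp. bounded) over a set $B$ of hyperimaginaries if every automorphism of $\mathfrak M$ fixing $B$ pointwise fixes $e$ (resp. the orbit of $e$ under such automorphisms is bounded); $\mathrm{dcl}^{heq}(B)$ and $\mathrm{bdd}(B)$ denote the sets of hyperimaginaries definable, resp. bounded, over $B$. A set $X$ is hyperdefinable over $A$ if $X=Z/E$ where $Z$ is type-definable over $A$ in countably many variables and $E$ is a countable equivalence relation on $Z$ over $A$. $X\perp_A Y$ (orthogonality over $A$) means: for all tuples $a$ from $X$ and $b$ from $Y$, $\mathrm{tp}(a/A)\cup\mathrm{tp}(b/A)\vdash\mathrm{tp}(ab/A)$. Internality: for hyperdefinable sets $X',X$, $X'$ is almost $X$-internal within a set $Z$ if there is a parameter set $B\subseteq Z^{heq}$ such that for every $a\in X'$ there is a tuple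 $b$ from $X$ with $a\in\mathrm{bdd}(Bb)$. "Within $X\cup Y$" means parameters from $(X\cup Y)^{heq}$, the set of hyperimaginaries definable over tuples from $X\cup Y$. *)

theory Defs
  imports Main "HOL-Library.Countable_Set"
begin

datatype 'f trm = Var nat | Fn 'f "'f trm list"

datatype ('f, 'r) fm =
    Bot
  | Eqf "'f trm" "'f trm"
  | Rel 'r "'f trm list"
  | Neg "('f, 'r) fm"
  | Conj "('f, 'r) fm" "('f, 'r) fm"
  | Exi nat "('f, 'r) fm"

text \<open>A structure with universe UNIV of type 'a: interpretations of the
  function symbols and the relation symbols.\<close>
type_synonym ('f, 'r, 'a) struc = "('f \<Rightarrow> 'a list \<Rightarrow> 'a) \<times> ('r \<Rightarrow> 'a list \<Rightarrow> bool)"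

fun evalt :: "('f, 'r, 'a) struc \<Rightarrow> (nat \<Rightarrow> 'a) \<Rightarrow> 'f trm \<Rightarrow> 'a" where
  "evalt S v (Var n) = v n"
| "evalt S v (Fn f ts) = fst S f (map (evalt S v) ts)"

primrec sat :: "('f, 'r, 'a) struc \<Rightarrow> (nat \<Rightarrow> 'a) \<Rightarrow> ('f, 'r) fm \<Rightarrow> bool" where
  "sat S v Bot = False"
| "sat S v (Eqf s t) = (evalt S v s = evalt S v t)"
| "sat S v (Rel r ts) = snd S r (map (evalt S v) ts)"
| "sat S v (Neg \<phi>) = (\<not> sat S v \<phi>)"
| "sat S v (Conj \<phi> \<psi>) = (sat S v \<phi> \<and> sat S v \<psi>)"
| "sat S v (Exi n \<phi>) = (\<exists>x. sat S (v(n := x)) \<phi>)"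

fun fvt :: "'f trm \<Rightarrow> nat set" where
  "fvt (Var n) = {n}"
| "fvt (Fn f ts) = (\<Union>t\<in>set ts. fvt t)"

primrec fv :: "('f, 'r) fm \<Rightarrow> nat set" where
  "fv Bot = {}"
| "fv (Eqf s t) = fvt s \<union> fvt t"
| "fv (Rel r ts) = (\<Union>t\<in>set ts. fvt t)"
| "fv (Neg \<phi>) = fv \<phi>"
| "fv (Conj \<phi> \<psi>) = fv \<phi> \<union> fv \<psi>"
| "fv (Exi n \<phi>) = fv \<phi> - {n}"

definition lt_card :: "'b set \<Rightarrow> 'k rel \<Rightarrow> bool" where
  "lt_card A \<kappa> \<longleftrightarrow> ordLess2 (card_of A) \<kappa>"

text \<open>Reading of "a very large kappa": an uncountable regular strong-limit
  cardinal (i.e. strongly inaccessible).\<close>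
definition very_large_card :: "'k rel \<Rightarrow> bool" where
  "very_large_card \<kappa> \<longleftrightarrow> Card_order \<kappa> \<and> ordLess2 natLeq \<kappa> \<and> regularCard \<kappa> \<and>
     (\<forall>A. A \<subseteq> Field \<kappa> \<longrightarrow> lt_card A \<kappa> \<longrightarrow> lt_card (Pow A) \<kappa>)"

definition is_aut :: "('f, 'r, 'a) struc \<Rightarrow> ('a \<Rightarrow> 'a) \<Rightarrow> bool" where
  "is_aut S \<sigma> \<longleftrightarrow> bij \<sigma> \<and>
     (\<forall>f xs. \<sigma> (fst S f xs) = fst S f (map \<sigma> xs)) \<and>
     (\<forall>r xs. snd S r (map \<sigma> xs) = snd S r xs)"

definition elem_map :: "('f, 'r, 'a) struc \<Rightarrow> 'a set \<Rightarrow> ('a \<Rightarrow> 'a) \<Rightarrow> bool" where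
  "elem_map S D g \<longleftrightarrow>
     (\<forall>(\<phi> :: ('f, 'r) fm) v. range v \<subseteq> D \<longrightarrow> (sat S v \<phi> \<longleftrightarrow> sat S (g \<circ> v) \<phi>))"

definition strongly_homogeneous :: "('f, 'r, 'a) struc \<Rightarrow> 'k rel \<Rightarrow> bool" where
  "strongly_homogeneous S \<kappa> \<longleftrightarrow>
     (\<forall>D g. lt_card D \<kappa> \<longrightarrow> elem_map S D g \<longrightarrow>
        (\<exists>\<sigma>. is_aut S \<sigma> \<and> (\<forall>x\<in>D. \<sigma> x = g x)))"

text \<open>A formula with parameters in the single free variable 0 is a pair
  (phi, p): the variables of phi other than 0 are interpreted by p.
  Element a realizes it iff sat S (p(0 := a)) phi.\<close>
definition saturated :: "('f, 'r, 'a) struc \<Rightarrow> 'k rel \<Rightarrow> bool" where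
  "saturated S \<kappa> \<longleftrightarrow>
     (\<forall>(A :: 'a set) (P :: (('f, 'r) fm \<times> (nat \<Rightarrow> 'a)) set).
        lt_card A \<kappa> \<longrightarrow>
        (\<forall>(\<phi>, p)\<in>P. \<forall>n\<in>fv \<phi> - {0}. p n \<in> A) \<longrightarrow>
        (\<forall>F. F \<subseteq> P \<longrightarrow> finite F \<longrightarrow> (\<exists>a. \<forall>(\<phi>, p)\<in>F. sat S (p(0 := a)) \<phi>)) \<longrightarrow>
        (\<exists>a. \<forall>(\<phi>, p)\<in>P. sat S (p(0 := a)) \<phi>))"

text \<open>Interleaving of two countable tuples, used as the variable assignment for
  formulas in the pair of variable tuples (x, y).\<close>
definition pairv :: "(nat \<Rightarrow> 'a) \<Rightarrow> (nat \<Rightarrow> 'a) \<Rightarrow> nat \<Rightarrow> 'a" where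
  "pairv a b n = (if even n then a (n div 2) else b (n div 2))"

definition tdef :: "('f, 'r, 'a) struc \<Rightarrow> ('f, 'r) fm set \<Rightarrow> (nat \<Rightarrow> 'a) set" where
  "tdef S \<Sigma> = {a. \<forall>\<phi>\<in>\<Sigma>. sat S a \<phi>}"

definition Erel :: "('f, 'r, 'a) struc \<Rightarrow> ('f, 'r) fm set \<Rightarrow> (nat \<Rightarrow> 'a) \<Rightarrow> (nat \<Rightarrow> 'a) \<Rightarrow> bool" where
  "Erel S \<Phi> a b \<longleftrightarrow> (\<forall>\<phi>\<in>\<Phi>. sat S (pairv a b) \<phi>)"

definition ceq_on :: "('f, 'r, 'a) struc \<Rightarrow> (nat \<Rightarrow> 'a) set \<Rightarrow> ('f, 'r) fm set \<Rightarrow> bool" where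
  "ceq_on S W \<Phi> \<longleftrightarrow> countable \<Phi> \<and>
     (\<forall>a\<in>W. Erel S \<Phi> a a) \<and>
     (\<forall>a\<in>W. \<forall>b\<in>W. Erel S \<Phi> a b \<longrightarrow> Erel S \<Phi> b a) \<and>
     (\<forall>a\<in>W. \<forall>b\<in>W. \<forall>c\<in>W. Erel S \<Phi> a b \<longrightarrow> Erel S \<Phi> b c \<longrightarrow> Erel S \<Phi> a c)"

text \<open>Hyperimaginaries are represented by their classes (sets of countable tuples).\<close>
definition hyperimaginary :: "('f, 'r, 'a) struc \<Rightarrow> (nat \<Rightarrow> 'a) set \<Rightarrow> bool" where
  "hyperimaginary S e \<longleftrightarrow>
     (\<exists>(\<Phi> :: ('f, 'r) fm set) a. ceq_on S UNIV \<Phi> \<and> e = {b. Erel S \<Phi> a b})"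

definition hyperdef :: "('f, 'r, 'a) struc \<Rightarrow> (nat \<Rightarrow> 'a) set set \<Rightarrow> bool" where
  "hyperdef S X \<longleftrightarrow>
     (\<exists>(\<Sigma> :: ('f, 'r) fm set) (\<Phi> :: ('f, 'r) fm set).
        ceq_on S (tdef S \<Sigma>) \<Phi> \<and>
        X = {{b \<in> tdef S \<Sigma>. Erel S \<Phi> a b} | a. a \<in> tdef S \<Sigma>})"

definition act :: "('a \<Rightarrow> 'a) \<Rightarrow> (nat \<Rightarrow> 'a) set \<Rightarrow> (nat \<Rightarrow> 'a) set" where
  "act \<sigma> e = (\<lambda>t. \<sigma> \<circ> t) ` e"

definition fixes_all :: "('a \<Rightarrow> 'a) \<Rightarrow> (nat \<Rightarrow> 'a) set set \<Rightarrow> bool" where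
  "fixes_all \<sigma> D \<longleftrightarrow> (\<forall>d\<in>D. act \<sigma> d = d)"

definition dclheq :: "('f, 'r, 'a) struc \<Rightarrow> (nat \<Rightarrow> 'a) set set \<Rightarrow> (nat \<Rightarrow> 'a) set \<Rightarrow> bool" where
  "dclheq S D e \<longleftrightarrow> (\<forall>\<sigma>. is_aut S \<sigma> \<and> fixes_all \<sigma> D \<longrightarrow> act \<sigma> e = e)"

definition bdd :: "('f, 'r, 'a) struc \<Rightarrow> 'k rel \<Rightarrow> (nat \<Rightarrow> 'a) set set \<Rightarrow> (nat \<Rightarrow> 'a) set \<Rightarrow> bool" where
  "bdd S \<kappa> D e \<longleftrightarrow> lt_card {act \<sigma> e | \<sigma>. is_aut S \<sigma> \<and> fixes_all \<sigma> D} \<kappa>"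

definition heq :: "('f, 'r, 'a) struc \<Rightarrow> 'k rel \<Rightarrow> (nat \<Rightarrow> 'a) set set \<Rightarrow> (nat \<Rightarrow> 'a) set set" where
  "heq S \<kappa> P = {e. hyperimaginary S e \<and> (\<exists>C\<subseteq>P. lt_card C \<kappa> \<and> dclheq S C e)}"

text \<open>For hyperimaginary tuples, equality of
  types (over the empty set) in the monster model is being in the same
  automorphism orbit; tp(a) \<union> tp(b) \<turnstile> tp(ab) says that any realizations
  sigma(a) of tp(a) and tau(b) of tp(b) together realize tp(ab).\<close>
definition orth :: "('f, 'r, 'a) struc \<Rightarrow> 'k rel \<Rightarrow> (nat \<Rightarrow> 'a) set set \<Rightarrow> (nat \<Rightarrow> 'a) set set \<Rightarrow> bool" where
  "orth S \<kappa> X Y \<longleftrightarrow>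
     (\<forall>a b \<sigma> \<tau>. a \<subseteq> X \<longrightarrow> b \<subseteq> Y \<longrightarrow> lt_card a \<kappa> \<longrightarrow> lt_card b \<kappa> \<longrightarrow>
        is_aut S \<sigma> \<longrightarrow> is_aut S \<tau> \<longrightarrow>
        (\<exists>\<rho>. is_aut S \<rho> \<and> (\<forall>x\<in>a. act \<rho> x = act \<sigma> x) \<and> (\<forall>y\<in>b. act \<rho> y = act \<tau> y)))"

definition alm_internal ::
  "('f, 'r, 'a) struc \<Rightarrow> 'k rel \<Rightarrow> (nat \<Rightarrow> 'a) set set \<Rightarrow> (nat \<Rightarrow> 'a) set set \<Rightarrow> (nat \<Rightarrow> 'a) set set \<Rightarrow> bool" where
  "alm_internal S \<kappa> X' X P \<longleftrightarrow>
     (\<exists>B. B \<subseteq> heq S \<kappa> P \<and> lt_card B \<kappa> \<and>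
        (\<forall>a\<in>X'. \<exists>b. b \<subseteq> X \<and> lt_card b \<kappa> \<and> bdd S \<kappa> (B \<union> b) a))"

end

(*
  If Z is almost X-internal and almost Y-internal, every z in Z is bounded over a common
  small set C of parameters from X and Y together with a small b in X, and also together
  with a small b' in Y. Orthogonality removes b and b': an automorphism g fixing C can be
  replaced by one that agrees with g on C and b while fixing b' and the boundedly many
  conjugates of b' over C and b. This covers the orbit of z over C by boundedly many
  translates of its orbit over C and b', so z is bounded over C.

  Finally, C is fixed by all automorphisms fixing a small set A of elements. Since the
  language is small, countable tuples realise boundedly many types over A, and tuples of
  the same type are conjugate over A by strong homogeneity; hence Z is a bounded union of
  bounded orbits.
*)

theory Submission
  imports Defs
begin

unbundle cardinal_syntax

section \<open>Cardinalities below a very large cardinal\<close>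

lemma lt_card_subset: "lt_card A \<kappa> \<Longrightarrow> B \<subseteq> A \<Longrightarrow> lt_card B \<kappa>"
  unfolding lt_card_def by (rule ordLeq_ordLess_trans[OF card_of_mono1])

lemma lt_card_image: "lt_card A \<kappa> \<Longrightarrow> lt_card (f ` A) \<kappa>"
  unfolding lt_card_def by (rule ordLeq_ordLess_trans[OF card_of_image])

lemma lt_card_inj_on: "lt_card B \<kappa> \<Longrightarrow> inj_on f A \<Longrightarrow> f ` A \<subseteq> B \<Longrightarrow> lt_card A \<kappa>"
  unfolding lt_card_def
  by (rule ordLeq_ordLess_trans[OF card_of_ordLeq[THEN iffD1, OF exI[of _ f]]]) auto

context
  fixes \<kappa> :: "'k rel"
  assumes \<kappa>: "very_large_card \<kappa>"
begin

lemma very_large_card_regular: "regularCard \<kappa>"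
  using \<kappa> unfolding very_large_card_def by simp

lemma very_large_card_Cinfinite: "Cinfinite \<kappa>"
proof -
  have co: "Card_order \<kappa>" and "natLeq <o \<kappa>"
    using \<kappa> unfolding very_large_card_def by auto
  then have "natLeq \<le>o |Field \<kappa>|"
    using card_of_Field_ordIso ordLess_imp_ordLeq ordLeq_ordIso_trans ordIso_symmetric by blast
  then show ?thesis
    using co infinite_iff_natLeq_ordLeq by (auto simp: cinfinite_def)
qed

lemma countable_lt_card: "countable A \<Longrightarrow> lt_card A \<kappa>"
proof -
  assume "countable A"
  then obtain f :: "_ \<Rightarrow> nat" where "inj_on f A"
    by (auto simp: countable_def)
  then have "|A| \<le>o |UNIV :: nat set|"
    by (intro card_of_ordLeq[THEN iffD1, OF exI[of _ f]]) auto
  then have "|A| \<le>o natLeq"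
    by (rule ordLeq_ordIso_trans[OF _ card_of_nat])
  moreover have "natLeq <o \<kappa>"
    using \<kappa> by (simp add: very_large_card_def)
  ultimately show ?thesis
    unfolding lt_card_def by (rule ordLeq_ordLess_trans)
qed

lemma lt_card_UN: "lt_card I \<kappa> \<Longrightarrow> (\<And>i. i \<in> I \<Longrightarrow> lt_card (F i) \<kappa>) \<Longrightarrow> lt_card (\<Union>i\<in>I. F i) \<kappa>"
  unfolding lt_card_def
  by (rule regularCard_UNION_bound[OF very_large_card_Cinfinite very_large_card_regular])

lemma lt_card_Un: "lt_card A \<kappa> \<Longrightarrow> lt_card B \<kappa> \<Longrightarrow> lt_card (A \<union> B) \<kappa>"
  unfolding lt_card_def by (rule Un_Cinfinite_bound_strict[OF _ _ very_large_card_Cinfinite])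

lemma lt_card_Plus: "lt_card A \<kappa> \<Longrightarrow> lt_card B \<kappa> \<Longrightarrow> lt_card (A <+> B) \<kappa>"
  using very_large_card_Cinfinite unfolding lt_card_def cinfinite_def
  by (intro card_of_Plus_ordLess_infinite_Field) auto

lemma lt_card_Times: "lt_card A \<kappa> \<Longrightarrow> lt_card B \<kappa> \<Longrightarrow> lt_card (A \<times> B) \<kappa>"
proof -
  assume "lt_card A \<kappa>" "lt_card B \<kappa>"
  then have "lt_card (\<Union>x\<in>A. Pair x ` B) \<kappa>"
    by (intro lt_card_UN lt_card_image)
  moreover have "A \<times> B = (\<Union>x\<in>A. Pair x ` B)"
    by blast
  ultimately show ?thesis
    by simp
qed

lemma lt_card_Pow: "lt_card A \<kappa> \<Longrightarrow> lt_card (Pow A) \<kappa>"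
proof -
  assume "lt_card A \<kappa>"
  \<comment> \<open>the strong-limit clause of \<^const>\<open>very_large_card\<close> only speaks about subsets of the field\<close>
  then obtain B where B: "B \<subseteq> Field \<kappa>" "|A| =o |B|" "|B| <o \<kappa>"
    using internalize_card_of_ordLess[of A \<kappa>] unfolding lt_card_def by blast
  then have "lt_card (Pow B) \<kappa>"
    using \<kappa> unfolding very_large_card_def lt_card_def by blast
  moreover obtain f where "bij_betw f A B"
    using B(2) card_of_ordIso by blast
  then have "bij_betw (image f) (Pow A) (Pow B)"
    by (rule bij_betw_Pow)
  ultimately show ?thesis
    by (metis bij_betw_def lt_card_inj_on subset_refl)
qed

lemma lt_card_funcs:
  assumes "countable (UNIV :: 'i set)" and "lt_card B \<kappa>"
  shows "lt_card {f :: 'i \<Rightarrow> 'b. range f \<subseteq> B} \<kappa>"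
proof (rule lt_card_inj_on)
  show "lt_card (Pow ((UNIV :: 'i set) \<times> B)) \<kappa>"
    using assms(2) by (intro lt_card_Pow lt_card_Times countable_lt_card[OF assms(1)])
  show "inj_on (\<lambda>f. range (\<lambda>i. (i, f i))) {f :: 'i \<Rightarrow> 'b. range f \<subseteq> B}"
    by (auto simp: inj_on_def fun_eq_iff)
qed auto

end

section \<open>Automorphisms and orbits\<close>

lemma is_aut_bij: "is_aut S \<sigma> \<Longrightarrow> bij \<sigma>"
  by (simp add: is_aut_def)

lemma evalt_aut: "is_aut S \<sigma> \<Longrightarrow> evalt S (\<sigma> \<circ> v) t = \<sigma> (evalt S v t)"
proof (induction t)
  case (Fn f ts)
  then have "map (evalt S (\<sigma> \<circ> v)) ts = map \<sigma> (map (evalt S v) ts)"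
    by (simp add: comp_def)
  with Fn.prems show ?case
    by (simp only: evalt.simps is_aut_def)
qed simp

lemma sat_aut: "is_aut S \<sigma> \<Longrightarrow> sat S (\<sigma> \<circ> v) \<phi> \<longleftrightarrow> sat S v \<phi>"
proof (induction \<phi> arbitrary: v)
  case (Eqf s t)
  then have "inj \<sigma>"
    by (simp add: is_aut_bij bij_is_inj)
  with Eqf show ?case
    by (simp only: sat.simps evalt_aut inj_eq)
next
  case (Rel r ts)
  have "map (evalt S (\<sigma> \<circ> v)) ts = map \<sigma> (map (evalt S v) ts)"
    by (induction ts) (simp_all only: list.map evalt_aut[OF Rel.prems])
  with Rel show ?case
    by (simp only: sat.simps is_aut_def)
next
  case (Exi n \<phi>)
  then have "surj \<sigma>"
    by (simp add: is_aut_bij bij_is_surj)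
  have upd: "(\<sigma> \<circ> v)(n := \<sigma> x) = \<sigma> \<circ> v(n := x)" for x
    by (simp add: fun_eq_iff)
  have "sat S (\<sigma> \<circ> v) (Exi n \<phi>) \<longleftrightarrow> (\<exists>x. sat S ((\<sigma> \<circ> v)(n := \<sigma> x)) \<phi>)"
    using \<open>surj \<sigma>\<close> by (metis sat.simps(6) surjD)
  also have "\<dots> \<longleftrightarrow> (\<exists>x. sat S (v(n := x)) \<phi>)"
    using Exi.IH[OF Exi.prems] by (simp only: upd)
  finally show ?case
    by (simp only: sat.simps)
qed auto

lemma is_aut_id: "is_aut S id"
  by (simp add: is_aut_def)

lemma is_aut_comp: "is_aut S \<sigma> \<Longrightarrow> is_aut S \<tau> \<Longrightarrow> is_aut S (\<sigma> \<circ> \<tau>)"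
  by (simp add: is_aut_def bij_comp flip: map_map)

lemma is_aut_inv: "is_aut S \<sigma> \<Longrightarrow> is_aut S (inv \<sigma>)"
proof -
  assume \<sigma>: "is_aut S \<sigma>"
  then have b: "bij \<sigma>"
    by (rule is_aut_bij)
  then have m: "map \<sigma> (map (inv \<sigma>) xs) = xs" for xs
    by (simp add: map_idI bij_is_surj surj_f_inv_f)
  have "\<sigma> (fst S f (map (inv \<sigma>) xs)) = fst S f xs" for f xs
    using \<sigma> m by (simp add: is_aut_def)
  then have "inv \<sigma> (fst S f xs) = fst S f (map (inv \<sigma>) xs)" for f xs
    using b by (metis bij_inv_eq_iff)
  moreover have "snd S r (map (inv \<sigma>) xs) = snd S r xs" for r xs
    using \<sigma> m unfolding is_aut_def by metis
  ultimately show ?thesis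
    using b by (simp add: is_aut_def bij_imp_bij_inv)
qed

lemma act_comp: "act (\<sigma> \<circ> \<tau>) e = act \<sigma> (act \<tau> e)"
  by (simp add: act_def image_comp comp_assoc)

lemma act_id: "act id e = e"
  by (simp add: act_def)

lemma act_inv_act: "is_aut S \<sigma> \<Longrightarrow> act (inv \<sigma>) (act \<sigma> e) = e"
  by (metis is_aut_bij act_comp act_id bij_is_inj inv_o_cancel)

lemma act_act_inv: "is_aut S \<sigma> \<Longrightarrow> act \<sigma> (act (inv \<sigma>) e) = e"
  by (metis is_aut_bij act_comp act_id bij_is_surj surj_iff)

lemma fixes_all_Un [simp]: "fixes_all \<sigma> (A \<union> B) \<longleftrightarrow> fixes_all \<sigma> A \<and> fixes_all \<sigma> B"
  by (auto simp: fixes_all_def)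

lemma fixes_all_subset: "fixes_all \<sigma> B \<Longrightarrow> A \<subseteq> B \<Longrightarrow> fixes_all \<sigma> A"
  by (auto simp: fixes_all_def)

lemma fixes_all_inv_comp:
  assumes "is_aut S \<rho>" and agree: "\<And>d. d \<in> D \<Longrightarrow> act \<rho> d = act g d"
  shows "fixes_all (inv \<rho> \<circ> g) D"
  using act_inv_act[OF assms(1)] by (simp add: fixes_all_def act_comp flip: agree)

lemma fixes_all_conj:
  "is_aut S k \<Longrightarrow> fixes_all \<rho> (act k ` D) \<Longrightarrow> fixes_all (inv k \<circ> \<rho> \<circ> k) D"
  by (simp add: fixes_all_def act_comp act_inv_act)

definition orbit :: "('f, 'r, 'a) struc \<Rightarrow> (nat \<Rightarrow> 'a) set set \<Rightarrow> (nat \<Rightarrow> 'a) set \<Rightarrow> (nat \<Rightarrow> 'a) set set" where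
  "orbit S D e = {act \<sigma> e | \<sigma>. is_aut S \<sigma> \<and> fixes_all \<sigma> D}"

lemma bdd_iff_orbit: "bdd S \<kappa> D e \<longleftrightarrow> lt_card (orbit S D e) \<kappa>"
  by (simp add: bdd_def orbit_def)

lemma bdd_mono:
  assumes "\<And>\<sigma>. is_aut S \<sigma> \<Longrightarrow> fixes_all \<sigma> D' \<Longrightarrow> fixes_all \<sigma> D" and "bdd S \<kappa> D e"
  shows "bdd S \<kappa> D' e"
proof -
  have "orbit S D' e \<subseteq> orbit S D e"
    using assms(1) by (auto simp: orbit_def)
  then show ?thesis
    using assms(2) by (simp add: bdd_iff_orbit lt_card_subset)
qed

section \<open>Hyperdefinable sets\<close>

definition eqclass :: "('f, 'r, 'a) struc \<Rightarrow> ('f, 'r) fm set \<Rightarrow> ('f, 'r) fm set \<Rightarrow> (nat \<Rightarrow> 'a) \<Rightarrow> (nat \<Rightarrow> 'a) set" where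
  "eqclass S \<Sigma> \<Phi> a = {b \<in> tdef S \<Sigma>. Erel S \<Phi> a b}"

lemma hyperdef_eqclass: "hyperdef S X \<Longrightarrow> \<exists>\<Sigma> \<Phi>. X = eqclass S \<Sigma> \<Phi> ` tdef S \<Sigma>"
  unfolding hyperdef_def eqclass_def by blast

lemma tdef_aut: "is_aut S \<sigma> \<Longrightarrow> \<sigma> \<circ> a \<in> tdef S \<Sigma> \<longleftrightarrow> a \<in> tdef S \<Sigma>"
  by (simp add: tdef_def sat_aut)

lemma Erel_aut: "is_aut S \<sigma> \<Longrightarrow> Erel S \<Phi> (\<sigma> \<circ> a) (\<sigma> \<circ> b) \<longleftrightarrow> Erel S \<Phi> a b"
proof -
  have "pairv (\<sigma> \<circ> a) (\<sigma> \<circ> b) = \<sigma> \<circ> pairv a b"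
    by (auto simp: pairv_def)
  then show "is_aut S \<sigma> \<Longrightarrow> ?thesis"
    by (simp add: Erel_def sat_aut)
qed

lemma act_eqclass_subset: "is_aut S \<sigma> \<Longrightarrow> act \<sigma> (eqclass S \<Sigma> \<Phi> a) \<subseteq> eqclass S \<Sigma> \<Phi> (\<sigma> \<circ> a)"
  by (auto simp: act_def eqclass_def tdef_aut Erel_aut)

lemma act_eqclass: "is_aut S \<sigma> \<Longrightarrow> act \<sigma> (eqclass S \<Sigma> \<Phi> a) = eqclass S \<Sigma> \<Phi> (\<sigma> \<circ> a)"
proof
  assume \<sigma>: "is_aut S \<sigma>"
  then show "act \<sigma> (eqclass S \<Sigma> \<Phi> a) \<subseteq> eqclass S \<Sigma> \<Phi> (\<sigma> \<circ> a)"
    by (rule act_eqclass_subset)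
  have "inv \<sigma> \<circ> (\<sigma> \<circ> a) = a"
    using \<sigma> by (simp add: is_aut_bij bij_is_inj flip: comp_assoc)
  then have "act (inv \<sigma>) (eqclass S \<Sigma> \<Phi> (\<sigma> \<circ> a)) \<subseteq> eqclass S \<Sigma> \<Phi> a"
    using act_eqclass_subset[OF is_aut_inv[OF \<sigma>], of \<Sigma> \<Phi> "\<sigma> \<circ> a"] by simp
  then have "act \<sigma> (act (inv \<sigma>) (eqclass S \<Sigma> \<Phi> (\<sigma> \<circ> a))) \<subseteq> act \<sigma> (eqclass S \<Sigma> \<Phi> a)"
    unfolding act_def by (rule image_mono)
  then show "eqclass S \<Sigma> \<Phi> (\<sigma> \<circ> a) \<subseteq> act \<sigma> (eqclass S \<Sigma> \<Phi> a)"
    by (simp only: act_act_inv[OF \<sigma>])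
qed

lemma hyperdef_act:
  assumes "hyperdef S X" and "x \<in> X" and \<sigma>: "is_aut S \<sigma>"
  shows "act \<sigma> x \<in> X"
proof -
  obtain \<Sigma> \<Phi> where X: "X = eqclass S \<Sigma> \<Phi> ` tdef S \<Sigma>"
    using hyperdef_eqclass[OF assms(1)] by blast
  with assms(2) obtain a where "a \<in> tdef S \<Sigma>" and "x = eqclass S \<Sigma> \<Phi> a"
    by blast
  then have "act \<sigma> x = eqclass S \<Sigma> \<Phi> (\<sigma> \<circ> a)" and "\<sigma> \<circ> a \<in> tdef S \<Sigma>"
    using act_eqclass[OF \<sigma>] tdef_aut[OF \<sigma>] by simp_all
  then show ?thesis
    unfolding X by (rule image_eqI)
qed

lemma hyperdef_fixed_by_rep:
  fixes x :: "(nat \<Rightarrow> 'a) set"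
  assumes "hyperdef S X" and "x \<in> X"
  shows "\<exists>a :: nat \<Rightarrow> 'a. \<forall>\<sigma>. is_aut S \<sigma> \<longrightarrow> \<sigma> \<circ> a = a \<longrightarrow> act \<sigma> x = x"
proof -
  obtain \<Sigma> \<Phi> where "X = eqclass S \<Sigma> \<Phi> ` tdef S \<Sigma>"
    using hyperdef_eqclass[OF assms(1)] by blast
  with assms(2) obtain a where x: "x = eqclass S \<Sigma> \<Phi> a"
    by blast
  have "\<forall>\<sigma>. is_aut S \<sigma> \<longrightarrow> \<sigma> \<circ> a = a \<longrightarrow> act \<sigma> x = x"
    by (simp add: x act_eqclass)
  then show ?thesis
    by blast
qed

section \<open>Formulas and types\<close>

text \<open>Terms and formulas are encoded injectively as labelled trees, i.e. as maps from
  positions (lists of child indices) to labels; this bounds the number of formulas.\<close>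

type_synonym ('f, 'r) token = "(nat \<times> nat) + ('f \<times> nat) + ('r \<times> nat)"

primrec enct :: "'f trm \<Rightarrow> nat list \<Rightarrow> ('f, 'r) token option" where
  "enct (Var n) = (\<lambda>p. if p = [] then Some (Inl (0, n)) else None)"
| "enct (Fn f ts) = (\<lambda>p. case p of [] \<Rightarrow> Some (Inr (Inl (f, length ts)))
     | i # q \<Rightarrow> if i < length ts then (map enct ts ! i) q else None)"

primrec encf :: "('f, 'r) fm \<Rightarrow> nat list \<Rightarrow> ('f, 'r) token option" where
  "encf Bot = (\<lambda>p. if p = [] then Some (Inl (1, 0)) else None)"
| "encf (Eqf s t) = (\<lambda>p. case p of [] \<Rightarrow> Some (Inl (2, 0))
     | i # q \<Rightarrow> if i = 0 then enct s q else if i = 1 then enct t q else None)"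
| "encf (Rel r ts) = (\<lambda>p. case p of [] \<Rightarrow> Some (Inr (Inr (r, length ts)))
     | i # q \<Rightarrow> if i < length ts then enct (ts ! i) q else None)"
| "encf (Neg \<phi>) = (\<lambda>p. case p of [] \<Rightarrow> Some (Inl (3, 0))
     | i # q \<Rightarrow> if i = 0 then encf \<phi> q else None)"
| "encf (Conj \<phi> \<psi>) = (\<lambda>p. case p of [] \<Rightarrow> Some (Inl (4, 0))
     | i # q \<Rightarrow> if i = 0 then encf \<phi> q else if i = 1 then encf \<psi> q else None)"
| "encf (Exi n \<phi>) = (\<lambda>p. case p of [] \<Rightarrow> Some (Inl (5, n))
     | i # q \<Rightarrow> if i = 0 then encf \<phi> q else None)"

lemma tree_eqD:
  "h = h' \<Longrightarrow> h [] = h' [] \<and> (\<lambda>q. h (0 # q)) = (\<lambda>q. h' (0 # q)) \<and> (\<lambda>q. h (1 # q)) = (\<lambda>q. h' (1 # q))"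
  by simp

lemma enct_inj:
  fixes s t :: "'f trm"
  shows "(enct s :: nat list \<Rightarrow> ('f, 'r) token option) = enct t \<Longrightarrow> s = t"
proof (induction s arbitrary: t)
  case (Var n)
  show ?case
    using tree_eqD[OF Var] by (cases t) auto
next
  case (Fn f ts)
  obtain us where t: "t = Fn f us" and len: "length us = length ts"
    using tree_eqD[OF Fn.prems] by (cases t) auto
  have "ts ! i = us ! i" if "i < length ts" for i
  proof (rule Fn.IH)
    show "ts ! i \<in> set ts"
      using that by simp
    have "(\<lambda>q. enct (Fn f ts) (i # q)) = (\<lambda>q. (enct t (i # q) :: ('f, 'r) token option))"
      using Fn.prems by simp
    then show "(enct (ts ! i) :: nat list \<Rightarrow> ('f, 'r) token option) = enct (us ! i)"
      using that t len by simp
  qed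
  then show ?case
    using t len by (simp add: nth_equalityI)
qed

lemma encf_inj:
  fixes \<phi> \<psi> :: "('f, 'r) fm"
  shows "encf \<phi> = encf \<psi> \<Longrightarrow> \<phi> = \<psi>"
proof (induction \<phi> arbitrary: \<psi>)
  case (Rel r ts)
  obtain us where \<psi>: "\<psi> = Rel r us" and len: "length us = length ts"
    using tree_eqD[OF Rel.prems] by (cases \<psi>) auto
  have "ts ! i = us ! i" if "i < length ts" for i
  proof (rule enct_inj)
    have "(\<lambda>q. encf (Rel r ts) (i # q)) = (\<lambda>q. encf \<psi> (i # q))"
      using Rel.prems by simp
    then show "(enct (ts ! i) :: nat list \<Rightarrow> ('f, 'r) token option) = enct (us ! i)"
      using that \<psi> len by simp
  qed
  then show ?case
    using \<psi> len by (simp add: nth_equalityI)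
next
  case Bot
  show ?case
    using tree_eqD[OF Bot] by (cases \<psi>) auto
next
  case (Eqf s t)
  show ?case
    using tree_eqD[OF Eqf] by (cases \<psi>) (auto dest: enct_inj)
next
  case (Neg \<phi>)
  show ?case
    using tree_eqD[OF Neg.prems] Neg.IH by (cases \<psi>) auto
next
  case (Conj \<phi>1 \<phi>2)
  show ?case
    using tree_eqD[OF Conj.prems] Conj.IH by (cases \<psi>) auto
next
  case (Exi n \<phi>)
  show ?case
    using tree_eqD[OF Exi.prems] Exi.IH by (cases \<psi>) auto
qed

text \<open>\<^term>\<open>tp S A a\<close> is the type of the tuple \<^term>\<open>a\<close> over \<^term>\<open>A\<close>: a formula
  with parameters is a formula \<open>\<phi>\<close> together with a substitution \<open>\<pi>\<close> that replaces each
  variable by a coordinate of the tuple (\<open>Inl i\<close>) or by a parameter from \<^term>\<open>A\<close> (\<open>Inr x\<close>).\<close>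

definition inst :: "(nat \<Rightarrow> 'a) \<Rightarrow> (nat \<Rightarrow> nat + 'a) \<Rightarrow> nat \<Rightarrow> 'a" where
  "inst a \<pi> = case_sum a id \<circ> \<pi>"

definition tp :: "('f, 'r, 'a) struc \<Rightarrow> 'a set \<Rightarrow> (nat \<Rightarrow> 'a) \<Rightarrow> (('f, 'r) fm \<times> (nat \<Rightarrow> nat + 'a)) set" where
  "tp S A a = {(\<phi>, \<pi>). range \<pi> \<subseteq> UNIV <+> A \<and> sat S (inst a \<pi>) \<phi>}"

lemma tp_eq_sat_iff:
  fixes S :: "('f, 'r, 'a) struc"
  assumes "tp S A a1 = tp S A a2" and "range \<pi> \<subseteq> UNIV <+> A"
  shows "sat S (inst a1 \<pi>) \<phi> \<longleftrightarrow> sat S (inst a2 \<pi>) \<phi>"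
  using assms unfolding tp_def by (auto simp: set_eq_iff)

lemma tp_eq_coord_eq:
  fixes S :: "('f, 'r, 'a) struc"
  assumes "tp S A a1 = tp S A a2" and "p \<in> UNIV <+> A" and "q \<in> UNIV <+> A"
    and "case_sum a1 id p = case_sum a1 id q"
  shows "case_sum a2 id p = case_sum a2 id q"
  using tp_eq_sat_iff[OF assms(1), of "\<lambda>n. if n = 0 then p else q" "Eqf (Var 0) (Var 1)"] assms(2-4)
  by (auto simp: inst_def)

lemma tp_eq_elem_map:
  fixes S :: "('f, 'r, 'a) struc"
  assumes eq: "tp S A a1 = tp S A a2"
  obtains g where "elem_map S (A \<union> range a1) g" and "g \<circ> a1 = a2" and "\<forall>x\<in>A. g x = x"
proof -
  define g where "g y = (if y \<in> A then y else a2 (inv a1 y))" for y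
  have g_a1: "g \<circ> a1 = a2"
  proof
    fix i
    show "(g \<circ> a1) i = a2 i"
    proof (cases "a1 i \<in> A")
      case True
      then show ?thesis
        using tp_eq_coord_eq[OF eq InlI InrI[OF True]] by (simp add: g_def)
    next
      case False
      then show ?thesis
        using tp_eq_coord_eq[OF eq InlI InlI, of "inv a1 (a1 i)" i] by (simp add: g_def f_inv_into_f)
    qed
  qed
  have g_inst: "g \<circ> inst a1 \<pi> = inst a2 \<pi>" if "range \<pi> \<subseteq> UNIV <+> A" for \<pi>
  proof
    fix n
    have "\<pi> n \<in> UNIV <+> A"
      using that by blast
    then show "(g \<circ> inst a1 \<pi>) n = inst a2 \<pi> n"
      using g_a1 by (cases "\<pi> n") (auto simp: inst_def g_def fun_eq_iff)
  qed
  have "elem_map S (A \<union> range a1) g"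
    unfolding elem_map_def
  proof (intro allI impI)
    fix \<phi> :: "('f, 'r) fm" and v :: "nat \<Rightarrow> 'a"
    assume v: "range v \<subseteq> A \<union> range a1"
    define \<pi> where "\<pi> n = (if v n \<in> A then Inr (v n) else Inl (inv a1 (v n)))" for n
    have \<pi>: "range \<pi> \<subseteq> UNIV <+> A"
      by (auto simp: \<pi>_def)
    have "inst a1 \<pi> = v"
    proof
      fix n
      have "v n \<in> A \<union> range a1"
        using v by blast
      then show "inst a1 \<pi> n = v n"
        by (auto simp: inst_def \<pi>_def f_inv_into_f)
    qed
    then show "sat S v \<phi> \<longleftrightarrow> sat S (g \<circ> v) \<phi>"
      using tp_eq_sat_iff[OF eq \<pi>] g_inst[OF \<pi>] by simp
  qed
  moreover have "\<forall>x\<in>A. g x = x"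
    by (simp add: g_def)
  ultimately show thesis
    using g_a1 that by blast
qed

context
  fixes \<kappa> :: "'k rel"
  assumes \<kappa>: "very_large_card \<kappa>"
begin

lemma lt_card_UNIV_fm:
  assumes "lt_card (UNIV :: 'f set) \<kappa>" and "lt_card (UNIV :: 'r set) \<kappa>"
  shows "lt_card (UNIV :: ('f, 'r) fm set) \<kappa>"
proof (rule lt_card_inj_on)
  have nat: "lt_card (UNIV :: nat set) \<kappa>"
    by (rule countable_lt_card[OF \<kappa>]) simp
  have "lt_card (UNIV :: ('f, 'r) token set) \<kappa>"
    unfolding UNIV_Plus_UNIV[symmetric] UNIV_Times_UNIV[symmetric]
    using assms nat by (intro lt_card_Plus[OF \<kappa>] lt_card_Times[OF \<kappa>])
  then have "lt_card ({None} \<union> range Some :: ('f, 'r) token option set) \<kappa>"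
    by (intro lt_card_Un[OF \<kappa> countable_lt_card[OF \<kappa>] lt_card_image]) simp_all
  then have "lt_card {h :: nat list \<Rightarrow> ('f, 'r) token option. range h \<subseteq> UNIV} \<kappa>"
    by (intro lt_card_funcs[OF \<kappa>]) (simp_all add: UNIV_option_conv)
  then show "lt_card (UNIV :: (nat list \<Rightarrow> ('f, 'r) token option) set) \<kappa>"
    by simp
  show "inj_on encf (UNIV :: ('f, 'r) fm set)"
    by (auto intro: inj_onI encf_inj)
qed simp

lemma lt_card_range_tp:
  fixes S :: "('f, 'r, 'a) struc"
  assumes "lt_card (UNIV :: 'f set) \<kappa>" and "lt_card (UNIV :: 'r set) \<kappa>" and "lt_card A \<kappa>"
  shows "lt_card (range (tp S A)) \<kappa>"
proof -
  define \<Pi> where "\<Pi> = {\<pi> :: nat \<Rightarrow> nat + 'a. range \<pi> \<subseteq> UNIV <+> A}"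
  have "lt_card ((UNIV :: nat set) <+> A) \<kappa>"
    using assms(3) by (intro lt_card_Plus[OF \<kappa> countable_lt_card[OF \<kappa>]]) simp_all
  then have "lt_card \<Pi> \<kappa>"
    unfolding \<Pi>_def by (intro lt_card_funcs[OF \<kappa>]) simp_all
  then have "lt_card (Pow (UNIV \<times> \<Pi>) :: (('f, 'r) fm \<times> _) set set) \<kappa>"
    using lt_card_UNIV_fm[OF assms(1,2)] by (intro lt_card_Pow[OF \<kappa>] lt_card_Times[OF \<kappa>])
  moreover have "range (tp S A) \<subseteq> Pow (UNIV \<times> \<Pi>)"
    by (auto simp: tp_def \<Pi>_def)
  ultimately show ?thesis
    by (rule lt_card_subset)
qed

lemma tp_eq_conjugate:
  fixes S :: "('f, 'r, 'a) struc"
  assumes SH: "strongly_homogeneous S \<kappa>" and A: "lt_card A \<kappa>" and eq: "tp S A a1 = tp S A a2"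
  shows "\<exists>\<sigma>. is_aut S \<sigma> \<and> (\<forall>x\<in>A. \<sigma> x = x) \<and> \<sigma> \<circ> a1 = a2"
proof -
  obtain g where g: "elem_map S (A \<union> range a1) g" "g \<circ> a1 = a2" "\<forall>x\<in>A. g x = x"
    using tp_eq_elem_map[OF eq] by blast
  have "lt_card (A \<union> range a1) \<kappa>"
    using A by (intro lt_card_Un[OF \<kappa> _ countable_lt_card[OF \<kappa>]]) simp_all
  then obtain \<sigma> where \<sigma>: "is_aut S \<sigma>" "\<forall>x\<in>A \<union> range a1. \<sigma> x = g x"
    using SH g(1) unfolding strongly_homogeneous_def by blast
  have "\<sigma> \<circ> a1 = a2"
    using \<sigma>(2) g(2) by (auto simp: fun_eq_iff)
  moreover have "\<forall>x\<in>A. \<sigma> x = x"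
    using \<sigma>(2) g(3) by simp
  ultimately show ?thesis
    using \<sigma>(1) by blast
qed

lemma eqclass_orbit_if_tp_eq:
  fixes S :: "('f, 'r, 'a) struc"
  assumes SH: "strongly_homogeneous S \<kappa>" and A: "lt_card A \<kappa>"
    and support: "\<And>\<sigma>. is_aut S \<sigma> \<Longrightarrow> \<forall>x\<in>A. \<sigma> x = x \<Longrightarrow> fixes_all \<sigma> C"
    and eq: "tp S A a0 = tp S A a"
  shows "eqclass S \<Sigma> \<Phi> a \<in> orbit S C (eqclass S \<Sigma> \<Phi> a0)"
proof -
  obtain \<sigma> where "is_aut S \<sigma>" "\<forall>x\<in>A. \<sigma> x = x" "\<sigma> \<circ> a0 = a"
    using tp_eq_conjugate[OF SH A eq] by blast
  then show ?thesis
    unfolding orbit_def using act_eqclass support by blast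
qed

lemma lt_card_hyperdef_if_bdd:
  fixes S :: "('f, 'r, 'a) struc"
  assumes SH: "strongly_homogeneous S \<kappa>"
    and F: "lt_card (UNIV :: 'f set) \<kappa>" and R: "lt_card (UNIV :: 'r set) \<kappa>"
    and Z: "hyperdef S Z" and A: "lt_card A \<kappa>"
    and support: "\<And>\<sigma>. is_aut S \<sigma> \<Longrightarrow> \<forall>x\<in>A. \<sigma> x = x \<Longrightarrow> fixes_all \<sigma> C"
    and bdd: "\<And>z. z \<in> Z \<Longrightarrow> bdd S \<kappa> C z"
  shows "lt_card Z \<kappa>"
proof -
  obtain \<Sigma> \<Phi> where Z_eq: "Z = eqclass S \<Sigma> \<Phi> ` tdef S \<Sigma>"
    using hyperdef_eqclass[OF Z] by blast
  define piece where "piece \<tau> = eqclass S \<Sigma> \<Phi> ` {a \<in> tdef S \<Sigma>. tp S A a = \<tau>}" for \<tau>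
  have "lt_card (piece \<tau>) \<kappa>" for \<tau>
  proof (cases "\<exists>a0 \<in> tdef S \<Sigma>. tp S A a0 = \<tau>")
    case True
    then obtain a0 where a0: "a0 \<in> tdef S \<Sigma>" "tp S A a0 = \<tau>"
      by blast
    have "piece \<tau> \<subseteq> orbit S C (eqclass S \<Sigma> \<Phi> a0)"
      using a0(2) eqclass_orbit_if_tp_eq[OF SH A support] by (auto simp: piece_def)
    moreover have "lt_card (orbit S C (eqclass S \<Sigma> \<Phi> a0)) \<kappa>"
      using bdd[of "eqclass S \<Sigma> \<Phi> a0"] a0(1) by (simp add: Z_eq bdd_iff_orbit)
    ultimately show ?thesis
      by (rule lt_card_subset[rotated])
  next
    case False
    then have "piece \<tau> = {}"
      by (auto simp: piece_def)
    then show ?thesis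
      by (simp add: countable_lt_card[OF \<kappa>])
  qed
  then have "lt_card (\<Union>\<tau>\<in>range (tp S A). piece \<tau>) \<kappa>"
    by (intro lt_card_UN[OF \<kappa>] lt_card_range_tp[OF F R A])
  moreover have "Z = (\<Union>\<tau>\<in>range (tp S A). piece \<tau>)"
    unfolding Z_eq piece_def by blast
  ultimately show ?thesis
    by simp
qed

section \<open>Orthogonality and internality\<close>

lemma orth_realign:
  assumes orth: "orth S \<kappa> X Y"
    and C: "C \<subseteq> X \<union> Y" "lt_card C \<kappa>" and b: "b \<subseteq> X" "lt_card b \<kappa>" and V: "V \<subseteq> Y" "lt_card V \<kappa>"
    and g: "is_aut S g" "fixes_all g C"
  obtains \<rho> where "is_aut S \<rho>" and "fixes_all \<rho> (C \<union> V)" and "fixes_all (inv \<rho> \<circ> g) (C \<union> b)"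
proof -
  have P: "C \<inter> X \<union> b \<subseteq> X" "lt_card (C \<inter> X \<union> b) \<kappa>"
    using C b by (auto intro: lt_card_Un[OF \<kappa>] lt_card_subset)
  have Q: "C \<inter> Y \<union> V \<subseteq> Y" "lt_card (C \<inter> Y \<union> V) \<kappa>"
    using C V by (auto intro: lt_card_Un[OF \<kappa>] lt_card_subset)
  obtain \<rho> where \<rho>: "is_aut S \<rho>"
    and agree: "\<forall>d\<in>C \<inter> X \<union> b. act \<rho> d = act g d"
    and fix_Y: "\<forall>d\<in>C \<inter> Y \<union> V. act \<rho> d = act id d"
    using orth[unfolded orth_def, rule_format, OF P(1) Q(1) P(2) Q(2) g(1) is_aut_id] by blast
  have g_C: "act g d = d" if "d \<in> C" for d
    using g(2) that by (simp add: fixes_all_def)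
  have \<rho>_CV: "fixes_all \<rho> (C \<union> V)"
    using C(1) agree fix_Y g_C by (auto simp: fixes_all_def act_id)
  moreover have "fixes_all (inv \<rho> \<circ> g) (C \<union> b)"
  proof (rule fixes_all_inv_comp[OF \<rho>])
    fix d
    assume "d \<in> C \<union> b"
    then show "act \<rho> d = act g d"
      using C(1) agree \<rho>_CV g_C by (auto simp: fixes_all_def)
  qed
  ultimately show thesis
    using \<rho> that by blast
qed

lemma orth_bdd_cancel:
  assumes orth: "orth S \<kappa> X Y" and Y: "hyperdef S Y"
    and C: "C \<subseteq> X \<union> Y" "lt_card C \<kappa>"
    and b: "b \<subseteq> X" "lt_card b \<kappa>" and b': "b' \<subseteq> Y" "lt_card b' \<kappa>"
    and bdd_b: "bdd S \<kappa> (C \<union> b) c" and bdd_b': "bdd S \<kappa> (C \<union> b') c"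
  shows "bdd S \<kappa> C c"
proof -
  let ?E = "orbit S (C \<union> b) c" and ?E' = "orbit S (C \<union> b') c"
  have "\<forall>e\<in>?E. \<exists>k. is_aut S k \<and> fixes_all k (C \<union> b) \<and> act k c = e"
    by (auto simp: orbit_def)
  then obtain k where k: "\<And>e. e \<in> ?E \<Longrightarrow> is_aut S (k e) \<and> fixes_all (k e) (C \<union> b) \<and> act (k e) c = e"
    by metis
  define W where "W = (\<Union>e\<in>?E. act (k e) ` b')"
  have "W \<subseteq> Y"
    using b'(1) k hyperdef_act[OF Y] by (auto simp: W_def)
  moreover have "lt_card W \<kappa>"
    unfolding W_def using bdd_b b'(2)
    by (intro lt_card_UN[OF \<kappa>] lt_card_image) (simp_all add: bdd_iff_orbit)
  ultimately have V: "b' \<union> W \<subseteq> Y" "lt_card (b' \<union> W) \<kappa>"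
    using b' lt_card_Un[OF \<kappa>] by auto
  have "orbit S C c \<subseteq> (\<Union>e\<in>?E. act (k e) ` ?E')"
  proof
    fix x
    assume "x \<in> orbit S C c"
    then obtain g where g: "is_aut S g" "fixes_all g C" and x: "x = act g c"
      by (auto simp: orbit_def)
    obtain \<rho> where \<rho>: "is_aut S \<rho>" "fixes_all \<rho> (C \<union> (b' \<union> W))" and h: "fixes_all (inv \<rho> \<circ> g) (C \<union> b)"
      using orth_realign[OF orth C b V g] by blast
    define e where "e = act (inv \<rho> \<circ> g) c"
    have e: "e \<in> ?E"
      unfolding e_def orbit_def using \<rho>(1) g(1) h by (blast intro: is_aut_comp is_aut_inv)
    then have ke: "is_aut S (k e)" "fixes_all (k e) (C \<union> b)" "act (k e) c = e"
      using k by blast+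
    define m where "m = inv (k e) \<circ> \<rho> \<circ> k e"
    have "act (k e) ` (C \<union> b') \<subseteq> C \<union> (b' \<union> W)"
      using ke(2) e by (auto simp: fixes_all_def W_def)
    then have "fixes_all m (C \<union> b')"
      unfolding m_def using ke(1) \<rho>(2) by (blast intro: fixes_all_conj fixes_all_subset)
    then have "act m c \<in> ?E'"
      unfolding orbit_def m_def using ke(1) \<rho>(1) by (blast intro: is_aut_comp is_aut_inv)
    moreover have "act (k e) (act m c) = x"
      using ke(1,3) \<rho>(1) by (simp add: m_def e_def x act_comp act_act_inv)
    ultimately show "x \<in> (\<Union>e\<in>?E. act (k e) ` ?E')"
      using e by blast
  qed
  moreover have "lt_card (\<Union>e\<in>?E. act (k e) ` ?E') \<kappa>"
    using bdd_b bdd_b' by (intro lt_card_UN[OF \<kappa>] lt_card_image) (simp_all add: bdd_iff_orbit)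
  ultimately show ?thesis
    unfolding bdd_iff_orbit by (rule lt_card_subset[rotated])
qed

lemma heq_small_support:
  assumes "B \<subseteq> heq S \<kappa> P" and "lt_card B \<kappa>"
  obtains C where "C \<subseteq> P" and "lt_card C \<kappa>"
    and "\<And>\<sigma>. is_aut S \<sigma> \<Longrightarrow> fixes_all \<sigma> C \<Longrightarrow> fixes_all \<sigma> B"
proof -
  have "\<forall>e\<in>B. \<exists>C. C \<subseteq> P \<and> lt_card C \<kappa> \<and> dclheq S C e"
    using assms(1) by (auto simp: heq_def)
  then obtain C where C: "\<And>e. e \<in> B \<Longrightarrow> C e \<subseteq> P \<and> lt_card (C e) \<kappa> \<and> dclheq S (C e) e"
    by metis
  have "(\<Union>e\<in>B. C e) \<subseteq> P"
    using C by blast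
  moreover have "lt_card (\<Union>e\<in>B. C e) \<kappa>"
    by (rule lt_card_UN[OF \<kappa> assms(2)]) (use C in blast)
  moreover have "fixes_all \<sigma> B" if \<sigma>: "is_aut S \<sigma>" "fixes_all \<sigma> (\<Union>e\<in>B. C e)" for \<sigma>
    unfolding fixes_all_def
  proof
    fix e
    assume e: "e \<in> B"
    then have "fixes_all \<sigma> (C e)"
      using \<sigma>(2) by (auto simp: fixes_all_def)
    then show "act \<sigma> e = e"
      using C[OF e] \<sigma>(1) by (simp add: dclheq_def)
  qed
  ultimately show thesis
    by (rule that)
qed

lemma alm_internal_support:
  assumes "alm_internal S \<kappa> Z X P"
  obtains C where "C \<subseteq> P" and "lt_card C \<kappa>"
    and "\<And>z. z \<in> Z \<Longrightarrow> \<exists>b\<subseteq>X. lt_card b \<kappa> \<and> bdd S \<kappa> (C \<union> b) z"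
proof -
  obtain B where B: "B \<subseteq> heq S \<kappa> P" "lt_card B \<kappa>"
    and int: "\<forall>z\<in>Z. \<exists>b\<subseteq>X. lt_card b \<kappa> \<and> bdd S \<kappa> (B \<union> b) z"
    using assms unfolding alm_internal_def by blast
  obtain C where C: "C \<subseteq> P" "lt_card C \<kappa>"
    and supp: "\<And>\<sigma>. is_aut S \<sigma> \<Longrightarrow> fixes_all \<sigma> C \<Longrightarrow> fixes_all \<sigma> B"
    using heq_small_support[OF B] by blast
  have mono: "bdd S \<kappa> (C \<union> b) z" if "bdd S \<kappa> (B \<union> b) z" for b z
  proof (rule bdd_mono[OF _ that])
    fix \<sigma>
    assume "is_aut S \<sigma>" and "fixes_all \<sigma> (C \<union> b)"
    then show "fixes_all \<sigma> (B \<union> b)"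
      using supp by simp
  qed
  have "\<exists>b\<subseteq>X. lt_card b \<kappa> \<and> bdd S \<kappa> (C \<union> b) z" if "z \<in> Z" for z
    using int mono that by blast
  with C show thesis
    by (rule that)
qed

lemma alm_internal_orth_bdd:
  assumes orth: "orth S \<kappa> X Y" and Y: "hyperdef S Y"
    and int_X: "alm_internal S \<kappa> Z X (X \<union> Y)" and int_Y: "alm_internal S \<kappa> Z Y (X \<union> Y)"
  obtains C where "C \<subseteq> X \<union> Y" and "lt_card C \<kappa>" and "\<And>z. z \<in> Z \<Longrightarrow> bdd S \<kappa> C z"
proof -
  obtain C1 where C1: "C1 \<subseteq> X \<union> Y" "lt_card C1 \<kappa>"
    and bdd_X: "\<And>z. z \<in> Z \<Longrightarrow> \<exists>b\<subseteq>X. lt_card b \<kappa> \<and> bdd S \<kappa> (C1 \<union> b) z"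
    using alm_internal_support[OF int_X] by blast
  obtain C2 where C2: "C2 \<subseteq> X \<union> Y" "lt_card C2 \<kappa>"
    and bdd_Y: "\<And>z. z \<in> Z \<Longrightarrow> \<exists>b\<subseteq>Y. lt_card b \<kappa> \<and> bdd S \<kappa> (C2 \<union> b) z"
    using alm_internal_support[OF int_Y] by blast
  have C: "C1 \<union> C2 \<subseteq> X \<union> Y" "lt_card (C1 \<union> C2) \<kappa>"
    using C1 C2 lt_card_Un[OF \<kappa>] by auto
  have "bdd S \<kappa> (C1 \<union> C2) z" if z: "z \<in> Z" for z
  proof -
    obtain b where b: "b \<subseteq> X" "lt_card b \<kappa>" "bdd S \<kappa> (C1 \<union> b) z"
      using bdd_X[OF z] by blast
    obtain b' where b': "b' \<subseteq> Y" "lt_card b' \<kappa>" "bdd S \<kappa> (C2 \<union> b') z"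
      using bdd_Y[OF z] by blast
    have "bdd S \<kappa> (C1 \<union> C2 \<union> b) z"
      by (rule bdd_mono[OF _ b(3)]) simp
    moreover have "bdd S \<kappa> (C1 \<union> C2 \<union> b') z"
      by (rule bdd_mono[OF _ b'(3)]) simp
    ultimately show ?thesis
      by (rule orth_bdd_cancel[OF orth Y C b(1,2) b'(1,2)])
  qed
  with C show thesis
    by (rule that)
qed

lemma small_pointwise_support:
  fixes C :: "(nat \<Rightarrow> 'a) set set"
  assumes "lt_card C \<kappa>"
    and rep: "\<And>d. d \<in> C \<Longrightarrow> \<exists>a :: nat \<Rightarrow> 'a. \<forall>\<sigma>. is_aut S \<sigma> \<longrightarrow> \<sigma> \<circ> a = a \<longrightarrow> act \<sigma> d = d"
  obtains A where "lt_card A \<kappa>" and "\<And>\<sigma>. is_aut S \<sigma> \<Longrightarrow> \<forall>x\<in>A. \<sigma> x = x \<Longrightarrow> fixes_all \<sigma> C"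
proof -
  have "\<forall>d\<in>C. \<exists>a :: nat \<Rightarrow> 'a. \<forall>\<sigma>. is_aut S \<sigma> \<longrightarrow> \<sigma> \<circ> a = a \<longrightarrow> act \<sigma> d = d"
    using rep by blast
  then obtain r :: "(nat \<Rightarrow> 'a) set \<Rightarrow> nat \<Rightarrow> 'a"
    where r: "\<And>d. d \<in> C \<Longrightarrow> \<forall>\<sigma>. is_aut S \<sigma> \<longrightarrow> \<sigma> \<circ> r d = r d \<longrightarrow> act \<sigma> d = d"
    by metis
  have "lt_card (\<Union>d\<in>C. range (r d)) \<kappa>"
    using assms(1) by (rule lt_card_UN[OF \<kappa>]) (simp add: countable_lt_card[OF \<kappa>])
  moreover have "fixes_all \<sigma> C" if \<sigma>: "is_aut S \<sigma>" "\<forall>x\<in>(\<Union>d\<in>C. range (r d)). \<sigma> x = x" for \<sigma>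
    unfolding fixes_all_def
  proof
    fix d
    assume d: "d \<in> C"
    then have "\<sigma> \<circ> r d = r d"
      using \<sigma>(2) by (auto simp: fun_eq_iff)
    then show "act \<sigma> d = d"
      using r[OF d] \<sigma>(1) by blast
  qed
  ultimately show thesis
    by (rule that)
qed

end

theorem mainTheorem11:
  fixes S :: "('f, 'r, 'a) struc" and \<kappa> :: "'k rel"
    and X Y Z :: "(nat \<Rightarrow> 'a) set set"
  assumes "very_large_card \<kappa>"
    and "lt_card (UNIV :: 'f set) \<kappa>" and "lt_card (UNIV :: 'r set) \<kappa>"
    and "saturated S \<kappa>" and "strongly_homogeneous S \<kappa>"
    and "hyperdef S X" and "hyperdef S Y" and "hyperdef S Z"
    and "orth S \<kappa> X Y"
    and "alm_internal S \<kappa> Z X (X \<union> Y)"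
    and "alm_internal S \<kappa> Z Y (X \<union> Y)"
  shows "lt_card Z \<kappa>"
proof -
  note \<kappa> = assms(1)
  obtain C where C: "C \<subseteq> X \<union> Y" "lt_card C \<kappa>" and bdd: "\<And>z. z \<in> Z \<Longrightarrow> bdd S \<kappa> C z"
    using alm_internal_orth_bdd[OF \<kappa> assms(9,7,10,11)] by blast
  have "\<exists>a :: nat \<Rightarrow> 'a. \<forall>\<sigma>. is_aut S \<sigma> \<longrightarrow> \<sigma> \<circ> a = a \<longrightarrow> act \<sigma> d = d" if "d \<in> C" for d
    using C(1) that hyperdef_fixed_by_rep[OF assms(6)] hyperdef_fixed_by_rep[OF assms(7)] by blast
  then obtain A where "lt_card A \<kappa>" and "\<And>\<sigma>. is_aut S \<sigma> \<Longrightarrow> \<forall>x\<in>A. \<sigma> x = x \<Longrightarrow> fixes_all \<sigma> C"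
    using small_pointwise_support[OF \<kappa> C(2)] by blast
  then show ?thesis
    using lt_card_hyperdef_if_bdd[OF \<kappa> assms(5,2,3,8)] bdd by blast
qed

end
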